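(* Let $G$ be a finite group with identity $e$, $R[G]$ its real group algebra, $S=\{x\in R[G]: \sum_gx_g=1,\ x_g\ge0\ \forall g\}$, and let $r>1$ be an integer. For $x\in S$ let $S_r(x)$ be the set of all limits of all convergent subsequences of $(x^{r^n})_{n\in\mathbb N}$, and let $d\ge1$ and distinct $m_0,\dots,m_{d-1}\in\{0,\dots,m_x-1\}$ be the repeating part of the eventually periodic sequence $(r^n \bmod m_x)_{n\in\mathbb N}$. Then: (1) $S_r(x)=\{c_xx^{m_i}: 0\le i<d\}=\{x^{m_i}c_x: 0\le i<d\}$; in particular $|S_r(x)|=1$ if and only if $m_x$ divides $r^k(r-1)$ for some $k\in\mathbb N$. (2) $\lim_{n\to\infty}\frac1n\sum_{i=1}^n x^{r^i}=\frac1d\sum_{i=0}^{d-1}x^{m_i}c_x$.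
   Context: $\mathrm{Supp}(y)=\{g: y_g\ne0\}$, $\mathbb N=\{1,2,\dots\}$, Euclidean topology on $R[G]$. For $x\in S$: $n_x=\min\{k\in\mathbb N:(x^k)_e\ne0\}$; $G_x$ is the subgroup of $G$ generated by $\mathrm{Supp}(x^{n_x})$; $c_x=\frac1{|G_x|}\sum_{g\in G_x}g$; $m_x=\min\{k\in\mathbb N:\mathrm{Supp}(x^k)\subset G_x\}$. *)

theory Defs
  imports "HOL-Analysis.Analysis" "HOL-Algebra.Generated_Groups"
begin

text \<open>Elements of the real group algebra R[G] of a finite group G (HOL-Algebra structure)
are represented as functions carrier G -> real, extended by 0 outside the carrier.
The Euclidean topology on R[G] is the product topology on 'a => real (coordinatewise convergence).\<close>

definition galg :: "('a, 'b) monoid_scheme \<Rightarrow> ('a \<Rightarrow> real) set" where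
  "galg G = {x. \<forall>g. g \<notin> carrier G \<longrightarrow> x g = 0}"

definition gmult :: "('a, 'b) monoid_scheme \<Rightarrow> ('a \<Rightarrow> real) \<Rightarrow> ('a \<Rightarrow> real) \<Rightarrow> ('a \<Rightarrow> real)" where
  "gmult G x y = (\<lambda>g. if g \<in> carrier G
      then (\<Sum>h\<in>carrier G. x h * y (inv\<^bsub>G\<^esub> h \<otimes>\<^bsub>G\<^esub> g)) else 0)"

definition gunit :: "('a, 'b) monoid_scheme \<Rightarrow> ('a \<Rightarrow> real)" where
  "gunit G = (\<lambda>g. if g = \<one>\<^bsub>G\<^esub> then 1 else 0)"

primrec gpow :: "('a, 'b) monoid_scheme \<Rightarrow> ('a \<Rightarrow> real) \<Rightarrow> nat \<Rightarrow> ('a \<Rightarrow> real)" where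
  "gpow G x 0 = gunit G"
| "gpow G x (Suc n) = gmult G (gpow G x n) x"

definition prob_simplex :: "('a, 'b) monoid_scheme \<Rightarrow> ('a \<Rightarrow> real) set" where
  "prob_simplex G = {x \<in> galg G. (\<forall>g\<in>carrier G. x g \<ge> 0) \<and> (\<Sum>g\<in>carrier G. x g) = 1}"

definition supp :: "('a, 'b) monoid_scheme \<Rightarrow> ('a \<Rightarrow> real) \<Rightarrow> 'a set" where
  "supp G y = {g \<in> carrier G. y g \<noteq> 0}"

definition n_of :: "('a, 'b) monoid_scheme \<Rightarrow> ('a \<Rightarrow> real) \<Rightarrow> nat" where
  "n_of G x = (LEAST k. k \<ge> 1 \<and> gpow G x k \<one>\<^bsub>G\<^esub> \<noteq> 0)"

definition G_of :: "('a, 'b) monoid_scheme \<Rightarrow> ('a \<Rightarrow> real) \<Rightarrow> 'a set" where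
  "G_of G x = generate G (supp G (gpow G x (n_of G x)))"

definition c_of :: "('a, 'b) monoid_scheme \<Rightarrow> ('a \<Rightarrow> real) \<Rightarrow> ('a \<Rightarrow> real)" where
  "c_of G x = (\<lambda>g. if g \<in> G_of G x then 1 / real (card (G_of G x)) else 0)"

definition m_of :: "('a, 'b) monoid_scheme \<Rightarrow> ('a \<Rightarrow> real) \<Rightarrow> nat" where
  "m_of G x = (LEAST k. k \<ge> 1 \<and> supp G (gpow G x k) \<subseteq> G_of G x)"

definition S_lim :: "('a, 'b) monoid_scheme \<Rightarrow> nat \<Rightarrow> ('a \<Rightarrow> real) \<Rightarrow> ('a \<Rightarrow> real) set" where
  "S_lim G r x = {L. \<exists>\<sigma>::nat \<Rightarrow> nat. strict_mono \<sigma> \<and>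
      ((\<lambda>n. gpow G x (r ^ (\<sigma> n + 1))) \<longlonglongrightarrow> L)}"

end

theory Submission
  imports Defs "HOL-Algebra.Multiplicative_Group"
begin

(* Let y = x^(n_x). It is a probability vector on G_x that charges the identity and whose
   support generates G_x, so some power y^k is bounded below on all of G_x; by Doeblin's
   argument, multiplication by y^k is then a strict l1-contraction on vectors of mass zero
   supported on G_x, and y^p -> c_x. As c_x absorbs every probability vector supported on G_x,
   writing N = n_x q + s gives x^N - c_x x^(N mod m_x) -> 0, while the c_x x^i (i < m_x) are
   pairwise distinct by the minimality of m_x. Along N = r^n the residues r^n mod m_x eventually
   run through the cycle m_0, ..., m_(d-1), so the limit points are exactly the c_x x^(m_i) and
   the Cesaro means converge to their average. *)

section \<open>Limits of sequences\<close>

lemma tendsto_fun_iff: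
  fixes f :: "'x \<Rightarrow> 'a \<Rightarrow> 'b::topological_space"
  shows "(f \<longlongrightarrow> l) F \<longleftrightarrow> (\<forall>i. ((\<lambda>n. f n i) \<longlongrightarrow> l i) F)"
proof -
  have "(f \<longlongrightarrow> l) F \<longleftrightarrow> limitin (product_topology (\<lambda>i. euclidean) UNIV) f l F"
    by (simp add: euclidean_product_topology)
  also have "\<dots> \<longleftrightarrow> (\<forall>i. ((\<lambda>n. f n i) \<longlongrightarrow> l i) F)"
    by (simp add: limitin_componentwise)
  finally show ?thesis .
qed

lemma closed_finite_fun_set:
  fixes S :: "('a \<Rightarrow> 'b::t2_space) set"
  assumes "finite S"
  shows "closed S"
proof -
  have "closed {s}" for s :: "'a \<Rightarrow> 'b"
  proof -
    have "{s} = (\<Inter>i. {f. f i = s i})" by auto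
    moreover have "closed {f :: 'a \<Rightarrow> 'b. f i = s i}" for i
      by (intro closed_Collect_eq continuous_on_product_coordinates continuous_on_const)
    ultimately show ?thesis by auto
  qed
  moreover have "S = (\<Union>s\<in>S. {s})" by blast
  ultimately show ?thesis using assms by (metis closed_UN)
qed

lemma cesaro_mean_tendsto_zero:
  fixes u :: "nat \<Rightarrow> real"
  assumes "u \<longlonglongrightarrow> 0"
  shows "(\<lambda>n. (\<Sum>i=1..n. u i) / n) \<longlonglongrightarrow> 0"
proof (rule tendstoI)
  fix \<epsilon> :: real assume "0 < \<epsilon>"
  then obtain N where N: "\<And>n. N \<le> n \<Longrightarrow> \<bar>u n\<bar> < \<epsilon> / 2"
    using tendstoD[OF assms, of "\<epsilon> / 2"] by (auto simp: eventually_sequentially)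
  define C where "C = (\<Sum>i=1..N. \<bar>u i\<bar>)"
  have bound: "\<bar>\<Sum>i=1..n. u i\<bar> \<le> C + n * (\<epsilon> / 2)" if "N \<le> n" for n
  proof -
    have "\<bar>\<Sum>i=1..n. u i\<bar> \<le> (\<Sum>i=1..N + (n - N). \<bar>u i\<bar>)"
      using that sum_abs[of u "{1..n}"] by simp
    also have "\<dots> = C + (\<Sum>i=N+1..N + (n - N). \<bar>u i\<bar>)"
      unfolding C_def by (rule sum.ub_add_nat) simp
    also have "(\<Sum>i=N+1..N + (n - N). \<bar>u i\<bar>) \<le> (\<Sum>i=N+1..N + (n - N). \<epsilon> / 2)"
      by (rule sum_mono) (use N in \<open>simp add: less_imp_le\<close>)
    also have "\<dots> \<le> n * (\<epsilon> / 2)"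
      using \<open>0 < \<epsilon>\<close> that by simp
    finally show ?thesis by simp
  qed
  have "\<forall>\<^sub>F n in sequentially. \<bar>C / n\<bar> < \<epsilon> / 2"
    using tendstoD[OF lim_const_over_n[of C], of "\<epsilon> / 2"] \<open>0 < \<epsilon>\<close> by (simp add: dist_real_def)
  moreover have "\<forall>\<^sub>F n in sequentially. max N 1 \<le> n"
    by (rule eventually_ge_at_top)
  ultimately show "\<forall>\<^sub>F n in sequentially. dist ((\<Sum>i=1..n. u i) / n) 0 < \<epsilon>"
  proof eventually_elim
    case (elim n)
    then have n: "0 < real n" by simp
    have "dist ((\<Sum>i=1..n. u i) / n) 0 = \<bar>\<Sum>i=1..n. u i\<bar> / n"
      by (simp add: dist_real_def abs_divide)
    also have "\<dots> \<le> (C + n * (\<epsilon> / 2)) / n"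
      using bound elim n by (simp add: divide_right_mono)
    also have "\<dots> = C / n + \<epsilon> / 2"
      using n by (simp add: field_simps)
    also have "\<dots> < \<epsilon>"
      using elim by linarith
    finally show ?case .
  qed
qed

lemma cesaro_mean_tendsto:
  fixes s :: "nat \<Rightarrow> real"
  assumes "s \<longlonglongrightarrow> l"
  shows "(\<lambda>n. (\<Sum>i=1..n. s i) / n) \<longlonglongrightarrow> l"
proof -
  have "(\<lambda>n. (\<Sum>i=1..n. s i - l) / n) \<longlonglongrightarrow> 0"
    by (rule cesaro_mean_tendsto_zero) (rule LIM_zero[OF assms])
  moreover have "\<forall>\<^sub>F n in sequentially. (\<Sum>i=1..n. s i - l) / n = (\<Sum>i=1..n. s i) / n - l"
    using eventually_ge_at_top[of 1]
    by eventually_elim (simp add: sum_subtractf diff_divide_distrib)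
  ultimately have "(\<lambda>n. (\<Sum>i=1..n. s i) / n - l) \<longlonglongrightarrow> 0"
    by (rule Lim_transform_eventually)
  then show ?thesis by (rule LIM_zero_cancel)
qed

lemma sum_shift_diff_bound:
  fixes a :: "nat \<Rightarrow> real"
  assumes bounded: "\<And>i. \<bar>a i\<bar> \<le> B"
  shows "\<bar>(\<Sum>i=1..n. a (i + t)) - (\<Sum>i=1..n. a i)\<bar> \<le> 2 * real t * B"
proof (induction t)
  case 0 then show ?case by simp
next
  case (Suc t)
  have "(\<Sum>i=1..n. a (Suc i + t) - a (i + t)) = a (Suc n + t) - a (1 + t)"
    by (rule sum_Suc_diff[where f="\<lambda>i. a (i + t)"]) simp
  then have step: "(\<Sum>i=1..n. a (i + Suc t)) - (\<Sum>i=1..n. a i)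
      = ((\<Sum>i=1..n. a (i + t)) - (\<Sum>i=1..n. a i)) + (a (Suc n + t) - a (1 + t))"
    by (simp add: sum_subtractf)
  have "\<bar>a (Suc n + t) - a (1 + t)\<bar> \<le> 2 * B"
    using bounded[of "Suc n + t"] bounded[of "1 + t"] by linarith
  moreover have "2 * real (Suc t) * B = 2 * real t * B + 2 * B"
    by (simp add: algebra_simps)
  ultimately show ?case
    unfolding step using Suc.IH abs_triangle_ineq[of "(\<Sum>i=1..n. a (i + t)) - (\<Sum>i=1..n. a i)"]
    by linarith
qed

lemma cesaro_mean_shift:
  fixes a :: "nat \<Rightarrow> real"
  assumes "\<And>i. \<bar>a i\<bar> \<le> B"
  shows "(\<lambda>n. (\<Sum>i=1..n. a (i + t)) / n - (\<Sum>i=1..n. a i) / n) \<longlonglongrightarrow> 0"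
proof (rule Lim_null_comparison)
  have "norm ((\<Sum>i=1..n. a (i + t)) / n - (\<Sum>i=1..n. a i) / n) \<le> 2 * real t * B / n" for n
  proof -
    have "\<bar>(\<Sum>i=1..n. a (i + t)) - (\<Sum>i=1..n. a i)\<bar> \<le> 2 * real t * B"
      by (rule sum_shift_diff_bound[OF assms])
    then show ?thesis
      by (simp add: diff_divide_distrib[symmetric] abs_divide divide_right_mono)
  qed
  then show "\<forall>\<^sub>F n in sequentially.
      norm ((\<Sum>i=1..n. a (i + t)) / n - (\<Sum>i=1..n. a i) / n) \<le> 2 * real t * B / n"
    by simp
  show "(\<lambda>n. 2 * real t * B / real n) \<longlonglongrightarrow> 0"
    by (rule lim_const_over_n)
qed

lemma cesaro_mean_tendsto_of_window_mean:
  fixes a :: "nat \<Rightarrow> real"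
  assumes bounded: "\<And>i. \<bar>a i\<bar> \<le> B" and "0 < d"
    and window: "(\<lambda>i. (\<Sum>t<d. a (i + t)) / d) \<longlonglongrightarrow> l"
  shows "(\<lambda>n. (\<Sum>i=1..n. a i) / n) \<longlonglongrightarrow> l"
proof -
  define W where "W i = (\<Sum>t<d. a (i + t)) / d" for i
  have diff: "(\<Sum>i=1..n. W i) / n - (\<Sum>i=1..n. a i) / n
      = (\<Sum>t<d. (\<Sum>i=1..n. a (i + t)) / n - (\<Sum>i=1..n. a i) / n) / d" for n
  proof -
    have "(\<Sum>i=1..n. W i) = (\<Sum>i=1..n. \<Sum>t<d. a (i + t)) / d"
      by (simp add: W_def sum_divide_distrib)
    also have "\<dots> = (\<Sum>t<d. \<Sum>i=1..n. a (i + t)) / d"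
      by (simp only: sum.swap[where A="{1..n}"])
    moreover have "(\<Sum>t<d. (\<Sum>i=1..n. a (i + t)) / n - (\<Sum>i=1..n. a i) / n)
        = (\<Sum>t<d. \<Sum>i=1..n. a (i + t)) / n - d * ((\<Sum>i=1..n. a i) / n)"
      by (simp add: sum_subtractf sum_divide_distrib)
    ultimately show ?thesis
      using \<open>0 < d\<close> by (cases "n = 0") (simp_all add: field_simps)
  qed
  have "(\<lambda>n. (\<Sum>i=1..n. W i) / n - (\<Sum>i=1..n. a i) / n) \<longlonglongrightarrow> 0"
    unfolding diff by (intro tendsto_divide_zero tendsto_null_sum cesaro_mean_shift[OF bounded])
  moreover have "(\<lambda>n. (\<Sum>i=1..n. W i) / n) \<longlonglongrightarrow> l"
    unfolding W_def by (rule cesaro_mean_tendsto[OF window])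
  ultimately show ?thesis
    using tendsto_diff by fastforce
qed

lemma tendsto_zero_of_decreasing_contraction:
  fixes u :: "nat \<Rightarrow> real"
  assumes nonneg: "\<And>p. 0 \<le> u p" and decreasing: "\<And>p. u (Suc p) \<le> u p"
    and contraction: "\<And>p. u (p + k) \<le> \<rho> * u p"
    and "0 < k" "0 \<le> \<rho>" "\<rho> < 1"
  shows "u \<longlonglongrightarrow> 0"
proof -
  have le_u0: "u p \<le> u 0" for p
  proof (induction p)
    case (Suc p)
    then show ?case using decreasing[of p] by linarith
  qed simp
  have bound: "u p \<le> \<rho> ^ (p div k) * u 0" for p
  proof (induction p rule: less_induct)
    case (less p)
    show ?case
    proof (cases "p < k")
      case True
      then show ?thesis using le_u0[of p] by simp
    next
      case False
      then have "p = (p - k) + k" and div: "p div k = Suc ((p - k) div k)"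
        using le_div_geq[OF \<open>0 < k\<close>, of p] by simp_all
      then have "u p \<le> \<rho> * u (p - k)"
        using contraction[of "p - k"] by simp
      also have "\<dots> \<le> \<rho> * (\<rho> ^ ((p - k) div k) * u 0)"
        using less[of "p - k"] False \<open>0 < k\<close> \<open>0 \<le> \<rho>\<close> by (simp add: mult_left_mono)
      finally show ?thesis by (simp add: div)
    qed
  qed
  have "(\<lambda>p. \<rho> ^ (p div k)) \<longlonglongrightarrow> 0"
    by (rule filterlim_compose[OF LIMSEQ_power_zero filterlim_at_top_div_const_nat[OF \<open>0 < k\<close>]])
       (use assms in simp)
  then have "(\<lambda>p. \<rho> ^ (p div k) * u 0) \<longlonglongrightarrow> 0"
    by (rule tendsto_mult_left_zero)
  then show ?thesis
    by (rule Lim_null_comparison[rotated]) (use bound nonneg in simp)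
qed

lemma sum_lessThan_rotate:
  fixes f :: "nat \<Rightarrow> 'b::comm_monoid_add"
  assumes "0 < d"
  shows "(\<Sum>t<d. f ((c + t) mod d)) = (\<Sum>j<d. f j)"
proof -
  have same: "s = t" if "t < d" "s \<le> t" "(c + s) mod d = (c + t) mod d" for s t
  proof -
    have "d dvd (c + t) - (c + s)"
      using that mod_eq_dvd_iff_nat[of "c + s" "c + t" d] by simp
    then have "d dvd t - s" by simp
    then show "s = t"
      using that dvd_imp_le[of d "t - s"] by (cases "t - s = 0") auto
  qed
  have inj: "inj_on (\<lambda>t. (c + t) mod d) {..<d}"
  proof (rule inj_onI)
    fix s t assume "s \<in> {..<d}" "t \<in> {..<d}" "(c + s) mod d = (c + t) mod d"
    then show "s = t" using same[of t s] same[of s t] by (metis lessThan_iff nat_le_linear)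
  qed
  have "(\<lambda>t. (c + t) mod d) ` {..<d} = {..<d}"
    by (rule endo_inj_surj[OF finite_lessThan _ inj]) (use assms in auto)
  then show ?thesis
    using sum.reindex[OF inj, of f] by simp
qed

section \<open>The group algebra of a finite group\<close>

definition l1_norm :: "('a, 'b) monoid_scheme \<Rightarrow> ('a \<Rightarrow> real) \<Rightarrow> real" where
  "l1_norm G f = (\<Sum>g\<in>carrier G. \<bar>f g\<bar>)"

definition supported_on :: "'a set \<Rightarrow> ('a \<Rightarrow> real) \<Rightarrow> bool" where
  "supported_on K f \<longleftrightarrow> (\<forall>g. g \<notin> K \<longrightarrow> f g = 0)"

definition uniform_on :: "'a set \<Rightarrow> 'a \<Rightarrow> real" where
  "uniform_on K = (\<lambda>g. if g \<in> K then 1 / card K else 0)"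

lemma gmult_outside: "g \<notin> carrier G \<Longrightarrow> gmult G u v g = 0"
  by (simp add: gmult_def)

lemma galg_outside: "u \<in> galg G \<Longrightarrow> g \<notin> carrier G \<Longrightarrow> u g = 0"
  by (simp add: galg_def)

lemma gmult_in_galg [simp]: "gmult G u v \<in> galg G"
  by (simp add: galg_def gmult_def)

lemma diff_in_galg: "u \<in> galg G \<Longrightarrow> v \<in> galg G \<Longrightarrow> (\<lambda>g. u g - v g) \<in> galg G"
  by (simp add: galg_def)

lemma prob_simplex_nonneg: "x \<in> prob_simplex G \<Longrightarrow> 0 \<le> x g"
  by (cases "g \<in> carrier G") (auto simp: prob_simplex_def galg_def)

lemma prob_simplex_sum: "x \<in> prob_simplex G \<Longrightarrow> (\<Sum>g\<in>carrier G. x g) = 1"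
  by (simp add: prob_simplex_def)

lemma prob_simplex_galg: "x \<in> prob_simplex G \<Longrightarrow> x \<in> galg G"
  by (simp add: prob_simplex_def)

lemma prob_simplexI:
  "u \<in> galg G \<Longrightarrow> (\<And>g. 0 \<le> u g) \<Longrightarrow> (\<Sum>g\<in>carrier G. u g) = 1 \<Longrightarrow> u \<in> prob_simplex G"
  by (simp add: prob_simplex_def)

lemma gmult_nonneg: "(\<And>g. 0 \<le> u g) \<Longrightarrow> (\<And>g. 0 \<le> v g) \<Longrightarrow> 0 \<le> gmult G u v g"
  by (auto simp: gmult_def intro!: sum_nonneg)

lemma gmult_diff_left: "gmult G (\<lambda>g. u g - v g) w = (\<lambda>g. gmult G u w g - gmult G v w g)"
  by (auto simp: gmult_def sum_subtractf left_diff_distrib)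

lemma gmult_diff_right: "gmult G u (\<lambda>g. v g - w g) = (\<lambda>g. gmult G u v g - gmult G u w g)"
  by (auto simp: gmult_def sum_subtractf right_diff_distrib)

lemma gmult_scale_right: "gmult G u (\<lambda>g. c * v g) = (\<lambda>g. c * gmult G u v g)"
  by (auto simp: gmult_def sum_distrib_left ac_simps)

lemma l1_norm_nonneg: "0 \<le> l1_norm G f"
  by (simp add: l1_norm_def sum_nonneg)

lemma l1_norm_prob_simplex: "x \<in> prob_simplex G \<Longrightarrow> l1_norm G x = 1"
  by (simp add: l1_norm_def prob_simplex_nonneg prob_simplex_sum)

lemma tendsto_gmult_left:
  assumes "\<And>g. ((\<lambda>q. f q g) \<longlongrightarrow> l g) F"
  shows "((\<lambda>q. gmult G (f q) u g) \<longlongrightarrow> gmult G l u g) F"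
  by (cases "g \<in> carrier G") (auto simp: gmult_def intro!: tendsto_sum tendsto_mult assms)

lemma tendsto_gmult_right:
  assumes "\<And>g. ((\<lambda>q. f q g) \<longlongrightarrow> l g) F"
  shows "((\<lambda>q. gmult G u (f q) g) \<longlongrightarrow> gmult G u l g) F"
  by (cases "g \<in> carrier G") (auto simp: gmult_def intro!: tendsto_sum tendsto_mult assms)

lemma (in group) inv_mult_in_subgroup_iff_right:
  assumes "subgroup K G" "h \<in> K" "g \<in> carrier G"
  shows "inv h \<otimes> g \<in> K \<longleftrightarrow> g \<in> K"
proof
  assume "inv h \<otimes> g \<in> K"
  then have "h \<otimes> (inv h \<otimes> g) \<in> K" using assms subgroup.m_closed by metis
  then show "g \<in> K" using assms by (simp add: m_assoc[symmetric] subgroup.mem_carrier)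
next
  assume "g \<in> K"
  then show "inv h \<otimes> g \<in> K" using assms
    by (metis m_inv_consistent subgroup.m_closed subgroup.m_inv_closed)
qed

lemma (in group) inv_mult_in_subgroup_iff_left:
  assumes "subgroup K G" "g \<in> K" "h \<in> carrier G"
  shows "inv h \<otimes> g \<in> K \<longleftrightarrow> h \<in> K"
proof -
  have g: "g \<in> carrier G" using assms subgroup.mem_carrier by metis
  have "inv h \<otimes> g \<in> K \<longleftrightarrow> inv g \<otimes> h \<in> K"
    using assms g by (metis inv_mult_group inv_closed inv_inv m_closed
        m_inv_consistent subgroup.m_inv_closed)
  also have "\<dots> \<longleftrightarrow> h \<in> K"
    using assms by (metis m_inv_consistent subgroup.m_inv_closed inv_mult_in_subgroup_iff_right g)
  finally show ?thesis .
qed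

lemma supp_subset_carrier: "supp G u \<subseteq> carrier G"
  by (auto simp: supp_def)

lemma supported_on_of_supp_subset: "u \<in> galg G \<Longrightarrow> supp G u \<subseteq> K \<Longrightarrow> supported_on K u"
  by (auto simp: supported_on_def supp_def galg_def)

locale finite_group = group G for G (structure) +
  assumes finite_carrier: "finite (carrier G)"
begin

lemma sum_carrier_mult_left:
  assumes "k \<in> carrier G"
  shows "(\<Sum>h\<in>carrier G. f (k \<otimes> h)) = (\<Sum>h\<in>carrier G. f h)"
  by (rule sum.reindex_bij_witness[where j="\<lambda>h. k \<otimes> h" and i="\<lambda>h. inv k \<otimes> h"])
     (use assms in \<open>auto simp: m_assoc[symmetric]\<close>)

lemma sum_carrier_inv_mult:
  assumes "g \<in> carrier G"
  shows "(\<Sum>h\<in>carrier G. f (inv h \<otimes> g)) = (\<Sum>h\<in>carrier G. f h)"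
  by (rule sum.reindex_bij_witness[where i="\<lambda>l. g \<otimes> inv l" and j="\<lambda>h. inv h \<otimes> g"])
     (use assms in \<open>auto simp: inv_mult_group m_assoc[symmetric], simp add: m_assoc\<close>)

lemma gmult_apply:
  "g \<in> carrier G \<Longrightarrow> gmult G u v g = (\<Sum>h\<in>carrier G. u h * v (inv h \<otimes> g))"
  by (simp add: gmult_def)

lemma gunit_in_galg [simp]: "gunit G \<in> galg G"
  by (auto simp: galg_def gunit_def)

lemma gpow_in_galg [simp]: "gpow G x n \<in> galg G"
  by (cases n) simp_all

lemma gmult_assoc: "gmult G (gmult G u v) w = gmult G u (gmult G v w)"
proof (rule ext)
  fix g
  show "gmult G (gmult G u v) w g = gmult G u (gmult G v w) g"
  proof (cases "g \<in> carrier G")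
    case False then show ?thesis by (simp add: gmult_outside)
  next
    case g: True
    have "gmult G (gmult G u v) w g
        = (\<Sum>h\<in>carrier G. \<Sum>k\<in>carrier G. u k * (v (inv k \<otimes> h) * w (inv h \<otimes> g)))"
      by (simp add: gmult_apply g sum_distrib_right mult.assoc)
    also have "\<dots> = (\<Sum>k\<in>carrier G. u k * (\<Sum>h\<in>carrier G. v (inv k \<otimes> h) * w (inv h \<otimes> g)))"
      by (subst sum.swap) (simp add: sum_distrib_left)
    also have "\<dots> = (\<Sum>k\<in>carrier G. u k * (\<Sum>l\<in>carrier G. v l * w (inv l \<otimes> (inv k \<otimes> g))))"
    proof (rule sum.cong[OF refl])
      fix k assume k: "k \<in> carrier G"
      have "(\<Sum>h\<in>carrier G. v (inv k \<otimes> h) * w (inv h \<otimes> g))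
          = (\<Sum>l\<in>carrier G. v (inv k \<otimes> (k \<otimes> l)) * w (inv (k \<otimes> l) \<otimes> g))"
        by (rule sum_carrier_mult_left[OF k, symmetric])
      also have "\<dots> = (\<Sum>l\<in>carrier G. v l * w (inv l \<otimes> (inv k \<otimes> g)))"
        by (rule sum.cong[OF refl]) (use k g in \<open>simp add: m_assoc[symmetric] inv_mult_group\<close>)
      finally show "u k * (\<Sum>h\<in>carrier G. v (inv k \<otimes> h) * w (inv h \<otimes> g))
          = u k * (\<Sum>l\<in>carrier G. v l * w (inv l \<otimes> (inv k \<otimes> g)))" by simp
    qed
    also have "\<dots> = gmult G u (gmult G v w) g"
      by (simp add: gmult_apply g)
    finally show ?thesis .
  qed
qed

lemma gunit_gmult [simp]: "u \<in> galg G \<Longrightarrow> gmult G (gunit G) u = u"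
proof (rule ext)
  fix g assume u: "u \<in> galg G"
  show "gmult G (gunit G) u g = u g"
  proof (cases "g \<in> carrier G")
    case False then show ?thesis using u by (simp add: gmult_outside galg_outside)
  next
    case True
    have "gmult G (gunit G) u g = (\<Sum>h\<in>carrier G. if h = \<one> then u (inv h \<otimes> g) else 0)"
      unfolding gmult_apply[OF True] by (rule sum.cong[OF refl]) (simp add: gunit_def)
    also have "\<dots> = u g" using True by (simp add: finite_carrier)
    finally show ?thesis .
  qed
qed

lemma gmult_gunit [simp]: "u \<in> galg G \<Longrightarrow> gmult G u (gunit G) = u"
proof (rule ext)
  fix g assume u: "u \<in> galg G"
  show "gmult G u (gunit G) g = u g"
  proof (cases "g \<in> carrier G")
    case False then show ?thesis using u by (simp add: gmult_outside galg_outside)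
  next
    case True
    have "gmult G u (gunit G) g = (\<Sum>h\<in>carrier G. if h = g then u h else 0)"
      unfolding gmult_apply[OF True]
    proof (rule sum.cong[OF refl])
      fix h assume h: "h \<in> carrier G"
      have "inv h \<otimes> g = \<one> \<longleftrightarrow> h = g"
        using h True inv_solve_left' by fastforce
      then show "u h * gunit G (inv h \<otimes> g) = (if h = g then u h else 0)"
        by (simp add: gunit_def)
    qed
    also have "\<dots> = u g" using True by (simp add: finite_carrier)
    finally show ?thesis .
  qed
qed

lemma gpow_add: "gpow G x (a + b) = gmult G (gpow G x a) (gpow G x b)"
  by (induction b) (simp_all add: gmult_assoc)

lemma gpow_one: "x \<in> galg G \<Longrightarrow> gpow G x 1 = x"
  by simp

lemma gpow_Suc_left:
  assumes "x \<in> galg G"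
  shows "gpow G x (Suc n) = gmult G x (gpow G x n)"
proof -
  have "gpow G x (Suc n) = gmult G (gpow G x 1) (gpow G x n)"
    using gpow_add[of x 1 n] by simp
  then show ?thesis by (simp only: gpow_one[OF assms])
qed

lemma gpow_mult: "gpow G x (a * b) = gpow G (gpow G x a) b"
proof (induction b)
  case (Suc b)
  have "gpow G x (a * Suc b) = gpow G x (a * b + a)"
    by (simp add: add.commute)
  also have "\<dots> = gmult G (gpow G x (a * b)) (gpow G x a)"
    by (rule gpow_add)
  finally show ?case by (simp only: Suc.IH gpow.simps)
qed simp

lemma sum_gmult:
  "(\<Sum>g\<in>carrier G. gmult G u v g) = (\<Sum>h\<in>carrier G. u h) * (\<Sum>g\<in>carrier G. v g)"
proof -
  have "(\<Sum>g\<in>carrier G. gmult G u v g) = (\<Sum>g\<in>carrier G. \<Sum>h\<in>carrier G. u h * v (inv h \<otimes> g))"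
    by (rule sum.cong) (simp_all add: gmult_apply)
  also have "\<dots> = (\<Sum>h\<in>carrier G. \<Sum>g\<in>carrier G. u h * v (inv h \<otimes> g))"
    by (rule sum.swap)
  also have "\<dots> = (\<Sum>h\<in>carrier G. u h * (\<Sum>g\<in>carrier G. v g))"
    by (rule sum.cong[OF refl]) (simp add: sum_distrib_left[symmetric] sum_carrier_mult_left)
  finally show ?thesis by (simp add: sum_distrib_right)
qed

lemma gmult_in_prob_simplex:
  assumes "u \<in> prob_simplex G" "v \<in> prob_simplex G"
  shows "gmult G u v \<in> prob_simplex G"
proof (rule prob_simplexI)
  show "0 \<le> gmult G u v g" for g
    by (rule gmult_nonneg) (simp_all add: prob_simplex_nonneg[OF assms(1)] prob_simplex_nonneg[OF assms(2)])
qed (simp_all add: sum_gmult prob_simplex_sum assms)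

lemma gunit_in_prob_simplex: "gunit G \<in> prob_simplex G"
  by (rule prob_simplexI[OF gunit_in_galg]) (auto simp: gunit_def finite_carrier)

lemma gpow_in_prob_simplex: "x \<in> prob_simplex G \<Longrightarrow> gpow G x n \<in> prob_simplex G"
  by (induction n) (simp_all add: gunit_in_prob_simplex gmult_in_prob_simplex)

lemma prob_simplex_le_1:
  assumes "x \<in> prob_simplex G"
  shows "x g \<le> 1"
proof (cases "g \<in> carrier G")
  case True
  then have "x g \<le> (\<Sum>h\<in>carrier G. x h)"
    by (intro member_le_sum finite_carrier prob_simplex_nonneg[OF assms])
  then show ?thesis using prob_simplex_sum[OF assms] by simp
qed (use galg_outside[OF prob_simplex_galg[OF assms]] in simp)

lemma gmult_ge_summand:
  assumes "\<And>g. 0 \<le> u g" "\<And>g. 0 \<le> v g" "g \<in> carrier G" "h \<in> carrier G"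
  shows "u h * v (inv h \<otimes> g) \<le> gmult G u v g"
  unfolding gmult_apply[OF assms(3)]
  by (rule member_le_sum[OF assms(4) _ finite_carrier]) (simp add: assms)

lemma abs_le_l1_norm: "g \<in> carrier G \<Longrightarrow> \<bar>f g\<bar> \<le> l1_norm G f"
  unfolding l1_norm_def by (rule member_le_sum) (simp_all add: finite_carrier)

lemma l1_norm_gmult_le: "l1_norm G (gmult G u v) \<le> l1_norm G u * l1_norm G v"
proof -
  have "l1_norm G (gmult G u v) \<le> (\<Sum>g\<in>carrier G. \<Sum>h\<in>carrier G. \<bar>u h\<bar> * \<bar>v (inv h \<otimes> g)\<bar>)"
    unfolding l1_norm_def
  proof (rule sum_mono)
    fix g assume "g \<in> carrier G"
    then show "\<bar>gmult G u v g\<bar> \<le> (\<Sum>h\<in>carrier G. \<bar>u h\<bar> * \<bar>v (inv h \<otimes> g)\<bar>)"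
      by (simp add: gmult_apply order_trans[OF sum_abs] abs_mult)
  qed
  also have "\<dots> = (\<Sum>h\<in>carrier G. \<bar>u h\<bar> * l1_norm G v)"
    unfolding l1_norm_def
  proof (subst sum.swap, rule sum.cong[OF refl])
    fix h assume "h \<in> carrier G"
    then have "(\<Sum>g\<in>carrier G. \<bar>v (inv h \<otimes> g)\<bar>) = (\<Sum>g\<in>carrier G. \<bar>v g\<bar>)"
      using sum_carrier_mult_left[of "inv h" "\<lambda>g. \<bar>v g\<bar>"] by simp
    then show "(\<Sum>g\<in>carrier G. \<bar>u h\<bar> * \<bar>v (inv h \<otimes> g)\<bar>) = \<bar>u h\<bar> * (\<Sum>g\<in>carrier G. \<bar>v g\<bar>)"
      by (simp add: sum_distrib_left[symmetric])
  qed
  finally show ?thesis by (simp add: l1_norm_def sum_distrib_right)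
qed

lemma tendsto_pointwise_of_l1_norm:
  assumes "((\<lambda>k. l1_norm G (f k)) \<longlongrightarrow> 0) F" "\<And>k. f k \<in> galg G"
  shows "((\<lambda>k. f k g) \<longlongrightarrow> 0) F"
proof (cases "g \<in> carrier G")
  case True
  show ?thesis
    by (rule Lim_null_comparison[OF always_eventually assms(1)]) (simp add: abs_le_l1_norm True)
qed (use galg_outside[OF assms(2)] in simp)


section \<open>Convergence of powers to the uniform distribution on a subgroup\<close>

lemma supported_on_gmult:
  assumes K: "subgroup K G" and "supported_on K u" "supported_on K v"
  shows "supported_on K (gmult G u v)"
  unfolding supported_on_def
proof (intro allI impI)
  fix g assume "g \<notin> K"
  show "gmult G u v g = 0"
  proof (cases "g \<in> carrier G")
    case True
    have "u h * v (inv h \<otimes> g) = 0" if "h \<in> carrier G" for h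
      using assms \<open>g \<notin> K\<close> inv_mult_in_subgroup_iff_right[OF K _ True, of h]
      by (cases "h \<in> K") (auto simp: supported_on_def)
    then show ?thesis unfolding gmult_apply[OF True] by (intro sum.neutral) blast
  qed (simp add: gmult_outside)
qed

lemma supported_on_gpow:
  assumes K: "subgroup K G" and "supported_on K y"
  shows "supported_on K (gpow G y n)"
proof (induction n)
  case 0
  show ?case using subgroup.one_closed[OF K] by (auto simp: supported_on_def gunit_def)
next
  case (Suc n)
  then show ?case by (simp add: supported_on_gmult K assms(2))
qed

lemma sum_uniform_on:
  assumes K: "subgroup K G"
  shows "(\<Sum>g\<in>carrier G. uniform_on K g) = 1"
proof -
  have "(\<Sum>g\<in>carrier G. uniform_on K g) = (\<Sum>g\<in>K. 1 / card K)"
    unfolding uniform_on_def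
    by (rule sum.mono_neutral_cong_right[OF finite_carrier subgroup.subset[OF K]]) auto
  also have "\<dots> = 1"
    using subgroup.finite_imp_card_positive[OF K finite_carrier] by simp
  finally show ?thesis .
qed

lemma uniform_on_in_prob_simplex:
  assumes K: "subgroup K G"
  shows "uniform_on K \<in> prob_simplex G"
proof (rule prob_simplexI)
  show "uniform_on K \<in> galg G"
    using subgroup.mem_carrier[OF K] by (auto simp: galg_def uniform_on_def)
  show "0 \<le> uniform_on K g" for g
    by (simp add: uniform_on_def)
  show "(\<Sum>g\<in>carrier G. uniform_on K g) = 1"
    by (rule sum_uniform_on[OF K])
qed

lemma uniform_on_gmult:
  assumes K: "subgroup K G" and f: "supported_on K f"
  shows "gmult G (uniform_on K) f = (\<lambda>g. (\<Sum>h\<in>carrier G. f h) * uniform_on K g)"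
proof (rule ext)
  fix g
  show "gmult G (uniform_on K) f g = (\<Sum>h\<in>carrier G. f h) * uniform_on K g"
  proof (cases "g \<in> carrier G")
    case g: True
    have "uniform_on K h * f (inv h \<otimes> g) = (if g \<in> K then f (inv h \<otimes> g) / card K else 0)"
      if "h \<in> carrier G" for h
      using f g that inv_mult_in_subgroup_iff_right[OF K _ g, of h]
        inv_mult_in_subgroup_iff_left[OF K _ that, of g]
      by (cases "h \<in> K"; cases "g \<in> K") (auto simp: uniform_on_def supported_on_def)
    then show ?thesis
      by (simp add: gmult_apply g sum_divide_distrib[symmetric] sum_carrier_inv_mult uniform_on_def)
  next
    case False
    then show ?thesis using subgroup.subset[OF K] by (auto simp: gmult_outside uniform_on_def)
  qed
qed

lemma gmult_uniform_on:
  assumes K: "subgroup K G" and f: "supported_on K f"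
  shows "gmult G f (uniform_on K) = (\<lambda>g. (\<Sum>h\<in>carrier G. f h) * uniform_on K g)"
proof (rule ext)
  fix g
  show "gmult G f (uniform_on K) g = (\<Sum>h\<in>carrier G. f h) * uniform_on K g"
  proof (cases "g \<in> carrier G")
    case g: True
    have "f h * uniform_on K (inv h \<otimes> g) = f h * uniform_on K g" if "h \<in> carrier G" for h
      using f inv_mult_in_subgroup_iff_right[OF K _ g, of h]
      by (cases "h \<in> K") (auto simp: uniform_on_def supported_on_def)
    then have "(\<Sum>h\<in>carrier G. f h * uniform_on K (inv h \<otimes> g))
        = (\<Sum>h\<in>carrier G. f h * uniform_on K g)"
      by (rule sum.cong[OF refl])
    then show ?thesis by (simp add: gmult_apply g sum_distrib_right)
  next
    case False
    then show ?thesis using subgroup.subset[OF K] by (auto simp: gmult_outside uniform_on_def)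
  qed
qed

lemma uniform_on_absorbs:
  assumes "subgroup K G" "z \<in> prob_simplex G" "supported_on K z"
  shows "gmult G (uniform_on K) z = uniform_on K"
  using uniform_on_gmult[OF assms(1,3)] prob_simplex_sum[OF assms(2)] by simp

lemma supp_subset_if_uniform_on_absorbs:
  assumes K: "subgroup K G" and z: "z \<in> prob_simplex G"
    and absorbs: "gmult G (uniform_on K) z = uniform_on K"
  shows "supp G z \<subseteq> K"
proof
  fix g assume "g \<in> supp G z"
  then have g: "g \<in> carrier G" and "0 < z g"
    using prob_simplex_nonneg[OF z, of g] by (auto simp: supp_def)
  moreover have "0 < uniform_on K \<one>"
    using subgroup.one_closed[OF K] subgroup.finite_imp_card_positive[OF K finite_carrier]
    by (simp add: uniform_on_def)
  ultimately have "0 < uniform_on K \<one> * z (inv \<one> \<otimes> g)" by simp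
  also have "\<dots> \<le> gmult G (uniform_on K) z g"
    by (rule gmult_ge_summand) (use g z prob_simplex_nonneg in \<open>auto simp: uniform_on_def\<close>)
  finally have "0 < uniform_on K g" by (simp only: absorbs)
  then show "g \<in> K" by (simp add: uniform_on_def split: if_splits)
qed

(* Doeblin's argument: z = delta |K| uniform_on K + w with w >= 0 of mass 1 - delta |K|,
   and f * uniform_on K = 0 because f has mass zero. *)

lemma l1_norm_gmult_contraction:
  assumes K: "subgroup K G" and z: "z \<in> prob_simplex G" "supported_on K z"
    and lower: "\<And>g. g \<in> K \<Longrightarrow> \<delta> \<le> z g"
    and f: "supported_on K f" "(\<Sum>g\<in>carrier G. f g) = 0"
  shows "l1_norm G (gmult G f z) \<le> (1 - \<delta> * card K) * l1_norm G f"
proof -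
  define w where "w g = z g - \<delta> * card K * uniform_on K g" for g
  have card: "0 < card K" by (rule subgroup.finite_imp_card_positive[OF K finite_carrier])
  have "0 \<le> w g" for g
    using lower[of g] z(2) card by (cases "g \<in> K") (auto simp: w_def uniform_on_def supported_on_def)
  then have "l1_norm G w = (\<Sum>g\<in>carrier G. z g) - \<delta> * card K * (\<Sum>g\<in>carrier G. uniform_on K g)"
    by (simp add: l1_norm_def w_def sum_subtractf sum_distrib_left)
  then have l1_w: "l1_norm G w = 1 - \<delta> * card K"
    by (simp add: prob_simplex_sum[OF z(1)] sum_uniform_on[OF K])
  have "gmult G f w = (\<lambda>g. gmult G f z g - \<delta> * card K * gmult G f (uniform_on K) g)"
    unfolding w_def by (simp only: gmult_diff_right gmult_scale_right)
  also have "\<dots> = gmult G f z"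
    using gmult_uniform_on[OF K f(1)] f(2) by simp
  finally have "gmult G f z = gmult G f w" by simp
  then have "l1_norm G (gmult G f z) \<le> l1_norm G f * l1_norm G w"
    by (simp add: l1_norm_gmult_le)
  then show ?thesis by (simp add: l1_w mult.commute)
qed

lemma gpow_pos_mult:
  assumes y: "y \<in> prob_simplex G" and "g \<in> carrier G" "h \<in> carrier G"
    and "0 < gpow G y i g" "0 < gpow G y j h"
  shows "0 < gpow G y (i + j) (g \<otimes> h)"
proof -
  have "0 < gpow G y i g * gpow G y j (inv g \<otimes> (g \<otimes> h))"
    using assms by (simp add: m_assoc[symmetric])
  also have "\<dots> \<le> gmult G (gpow G y i) (gpow G y j) (g \<otimes> h)"
    by (rule gmult_ge_summand)
       (simp_all add: assms prob_simplex_nonneg[OF gpow_in_prob_simplex[OF y]])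
  finally show ?thesis by (simp add: gpow_add)
qed

lemma gpow_pos_nat_pow:
  assumes y: "y \<in> prob_simplex G" and a: "a \<in> carrier G" and pos: "0 < gpow G y i a"
  shows "0 < gpow G y (i * q) (a [^] q)"
proof (induction q)
  case 0
  then show ?case by (simp add: gunit_def)
next
  case (Suc q)
  have "0 < gpow G y (i * q + i) (a [^] q \<otimes> a)"
    by (rule gpow_pos_mult[OF y _ a Suc pos]) (simp add: a)
  then show ?case by (simp add: add.commute)
qed

lemma gpow_pos_mono:
  assumes y: "y \<in> prob_simplex G" "0 < y \<one>"
    and g: "g \<in> carrier G" "0 < gpow G y i g" and "i \<le> j"
  shows "0 < gpow G y j g"
proof -
  have "0 < gpow G y (1 * (j - i)) (\<one> [^] (j - i))"
    by (rule gpow_pos_nat_pow) (simp_all add: y prob_simplex_galg)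
  then have "0 < gpow G y (i + (j - i)) (g \<otimes> \<one>)"
    by (intro gpow_pos_mult[OF y(1)]) (simp_all add: g)
  then show ?thesis using \<open>i \<le> j\<close> g by simp
qed

lemma gpow_pos_on_generate:
  assumes y: "y \<in> prob_simplex G" and h: "h \<in> generate G (supp G y)"
  shows "\<exists>k. 0 < gpow G y k h"
  using h
proof (induction rule: generate.induct)
  case one
  show ?case by (rule exI[of _ 0]) (simp add: gunit_def)
next
  case (incl h)
  then show ?case using prob_simplex_nonneg[OF y, of h]
    by (intro exI[of _ 1]) (auto simp: supp_def prob_simplex_galg[OF y] less_le)
next
  case (inv h)
  then have h: "h \<in> carrier G" "0 < gpow G y 1 h"
    using prob_simplex_nonneg[OF y, of h] by (auto simp: supp_def prob_simplex_galg[OF y] less_le)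
  have "h [^] (ord h - 1) \<otimes> h = \<one>"
    using ord_ge_1[OF finite_carrier h(1)] h(1) by (simp flip: nat_pow_Suc)
  then have "inv h = h [^] (ord h - 1)"
    by (rule inv_equality) (simp_all add: h)
  then show ?case using gpow_pos_nat_pow[OF y h, of "ord h - 1"] by auto
next
  case (eng h1 h2)
  from eng.IH(1) obtain k1 where "0 < gpow G y k1 h1" ..
  moreover from eng.IH(2) obtain k2 where "0 < gpow G y k2 h2" ..
  moreover have "h1 \<in> carrier G" "h2 \<in> carrier G"
    using eng.hyps by (simp_all add: generate_in_carrier[OF supp_subset_carrier])
  ultimately have "0 < gpow G y (k1 + k2) (h1 \<otimes> h2)"
    by (intro gpow_pos_mult[OF y])
  then show ?case by blast
qed

lemma gpow_bounded_below_on_generate: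
  assumes y: "y \<in> prob_simplex G" "0 < y \<one>"
  obtains k \<delta> where "0 < k" "0 < \<delta>" "\<And>g. g \<in> generate G (supp G y) \<Longrightarrow> \<delta> \<le> gpow G y k g"
proof -
  let ?K = "generate G (supp G y)"
  have "finite ?K"
    by (rule finite_subset[OF generate_incl[OF supp_subset_carrier] finite_carrier])
  define k_of where "k_of g = (SOME k. 0 < gpow G y k g)" for g
  have k_of: "0 < gpow G y (k_of g) g" if "g \<in> ?K" for g
    unfolding k_of_def by (rule someI_ex[OF gpow_pos_on_generate[OF y(1) that]])
  define k where "k = Suc (\<Sum>h\<in>?K. k_of h)"
  have pos: "0 < gpow G y k g" if "g \<in> ?K" for g
  proof (rule gpow_pos_mono[OF y _ k_of[OF that]])
    show "g \<in> carrier G"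
      by (rule generate_in_carrier[OF supp_subset_carrier that])
    show "k_of g \<le> k"
      using member_le_sum[OF that _ \<open>finite ?K\<close>, of k_of] by (simp add: k_def)
  qed
  define \<delta> where "\<delta> = Min (gpow G y k ` ?K)"
  have "0 < \<delta>"
    unfolding \<delta>_def using \<open>finite ?K\<close> pos generate.one by (subst Min_gr_iff) auto
  moreover have "\<delta> \<le> gpow G y k g" if "g \<in> ?K" for g
    unfolding \<delta>_def using \<open>finite ?K\<close> that by simp
  ultimately show ?thesis using that[of k \<delta>] by (simp add: k_def)
qed

lemma lower_bound_mult_card_le_1:
  assumes z: "z \<in> prob_simplex G" and "K \<subseteq> carrier G" and lower: "\<And>g. g \<in> K \<Longrightarrow> \<delta> \<le> z g"
  shows "\<delta> * card K \<le> 1"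
proof -
  have "\<delta> * card K = (\<Sum>g\<in>K. \<delta>)" by simp
  also have "\<dots> \<le> (\<Sum>g\<in>K. z g)" by (rule sum_mono) (rule lower)
  also have "\<dots> \<le> (\<Sum>g\<in>carrier G. z g)"
    by (rule sum_mono2[OF finite_carrier \<open>K \<subseteq> carrier G\<close>]) (rule prob_simplex_nonneg[OF z])
  also have "\<dots> = 1" by (rule prob_simplex_sum[OF z])
  finally show ?thesis .
qed

theorem gpow_tendsto_uniform_on_generate:
  assumes y: "y \<in> prob_simplex G" "0 < y \<one>"
  shows "(\<lambda>p. l1_norm G (\<lambda>g. gpow G y p g - uniform_on (generate G (supp G y)) g)) \<longlonglongrightarrow> 0"
proof -
  define K where "K = generate G (supp G y)"
  have K: "subgroup K G"
    unfolding K_def by (rule generate_is_subgroup[OF supp_subset_carrier])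
  have y_K: "supported_on K y"
    by (rule supported_on_of_supp_subset) (auto simp: K_def prob_simplex_galg[OF y(1)] intro: generate.incl)
  have card: "0 < card K"
    by (rule subgroup.finite_imp_card_positive[OF K finite_carrier])
  obtain k \<delta> where "0 < k" "0 < \<delta>" and \<delta>_le: "\<And>g. g \<in> K \<Longrightarrow> \<delta> \<le> gpow G y k g"
    using gpow_bounded_below_on_generate[OF y] unfolding K_def by blast
  have "\<delta> * card K \<le> 1"
    by (rule lower_bound_mult_card_le_1[OF gpow_in_prob_simplex[OF y(1)] subgroup.subset[OF K] \<delta>_le])
  define e where "e p = (\<lambda>g. gpow G y p g - uniform_on K g)" for p
  have e_step: "e (p + q) = gmult G (e p) (gpow G y q)" for p q
    using uniform_on_absorbs[OF K gpow_in_prob_simplex[OF y(1)] supported_on_gpow[OF K y_K]]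
    by (simp add: e_def gmult_diff_left gpow_add)
  have e_K: "supported_on K (e p)" for p
    using supported_on_gpow[OF K y_K, of p] by (auto simp: e_def supported_on_def uniform_on_def)
  have e_sum: "(\<Sum>g\<in>carrier G. e p g) = 0" for p
    by (simp add: e_def sum_subtractf sum_uniform_on[OF K]
        prob_simplex_sum[OF gpow_in_prob_simplex[OF y(1)]])
  have "(\<lambda>p. l1_norm G (e p)) \<longlonglongrightarrow> 0"
  proof (rule tendsto_zero_of_decreasing_contraction)
    show "l1_norm G (e (Suc p)) \<le> l1_norm G (e p)" for p
      using e_step[of p 1] l1_norm_gmult_le[of "e p" "gpow G y 1"]
        l1_norm_prob_simplex[OF gpow_in_prob_simplex[OF y(1)], of 1] by simp
    show "l1_norm G (e (p + k)) \<le> (1 - \<delta> * card K) * l1_norm G (e p)" for p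
      unfolding e_step
      by (rule l1_norm_gmult_contraction[OF K gpow_in_prob_simplex[OF y(1)]
            supported_on_gpow[OF K y_K] \<delta>_le e_K e_sum])
  qed (use l1_norm_nonneg \<open>0 < k\<close> \<open>\<delta> * card K \<le> 1\<close> \<open>0 < \<delta>\<close> card in auto)
  then show ?thesis by (simp add: e_def K_def)
qed

end

section \<open>The sequence of powers of a probability vector\<close>

locale random_walk = finite_group +
  fixes x :: "'a \<Rightarrow> real"
  assumes x_in_prob_simplex: "x \<in> prob_simplex G"
begin

lemma gpow_x_in_prob_simplex: "gpow G x n \<in> prob_simplex G"
  by (rule gpow_in_prob_simplex[OF x_in_prob_simplex])

lemma n_of_exists: "\<exists>k. 1 \<le> k \<and> gpow G x k \<one> \<noteq> 0"
proof -
  obtain a where a: "a \<in> carrier G" "x a \<noteq> 0"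
    using prob_simplex_sum[OF x_in_prob_simplex] by (metis sum.neutral zero_neq_one)
  then have "0 < gpow G x 1 a"
    using prob_simplex_nonneg[OF x_in_prob_simplex, of a]
    by (simp add: prob_simplex_galg[OF x_in_prob_simplex])
  then have "0 < gpow G x (1 * ord a) (a [^] ord a)"
    by (rule gpow_pos_nat_pow[OF x_in_prob_simplex a(1)])
  then show ?thesis
    using ord_ge_1[OF finite_carrier a(1)] a(1) by (intro exI[of _ "ord a"]) simp
qed

lemma n_of: "1 \<le> n_of G x" "0 < gpow G x (n_of G x) \<one>"
proof -
  have "1 \<le> n_of G x \<and> gpow G x (n_of G x) \<one> \<noteq> 0"
    unfolding n_of_def by (rule LeastI_ex[OF n_of_exists])
  then show "1 \<le> n_of G x" "0 < gpow G x (n_of G x) \<one>"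
    using prob_simplex_nonneg[OF gpow_x_in_prob_simplex, of "n_of G x" \<one>] by auto
qed

lemma subgroup_G_of: "subgroup (G_of G x) G"
  unfolding G_of_def by (rule generate_is_subgroup[OF supp_subset_carrier])

lemma supported_on_G_of: "supp G (gpow G x k) \<subseteq> G_of G x \<Longrightarrow> supported_on (G_of G x) (gpow G x k)"
  using supported_on_of_supp_subset[of "gpow G x k" G] by simp

lemma c_of_eq_uniform_on: "c_of G x = uniform_on (G_of G x)"
  by (simp add: c_of_def uniform_on_def)

lemma c_of_in_prob_simplex: "c_of G x \<in> prob_simplex G"
  unfolding c_of_eq_uniform_on by (rule uniform_on_in_prob_simplex[OF subgroup_G_of])

lemma m_of: "1 \<le> m_of G x" "supp G (gpow G x (m_of G x)) \<subseteq> G_of G x"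
proof -
  have "\<exists>k. 1 \<le> k \<and> supp G (gpow G x k) \<subseteq> G_of G x"
    using n_of(1) by (auto simp: G_of_def intro: generate.incl)
  then have "1 \<le> m_of G x \<and> supp G (gpow G x (m_of G x)) \<subseteq> G_of G x"
    unfolding m_of_def by (rule LeastI_ex)
  then show "1 \<le> m_of G x" "supp G (gpow G x (m_of G x)) \<subseteq> G_of G x"
    by auto
qed

lemma m_of_minimal: "1 \<le> k \<Longrightarrow> k < m_of G x \<Longrightarrow> \<not> supp G (gpow G x k) \<subseteq> G_of G x"
  unfolding m_of_def using not_less_Least by blast

lemma gpow_n_of_tendsto_c_of:
  "(\<lambda>p. l1_norm G (\<lambda>g. gpow G (gpow G x (n_of G x)) p g - c_of G x g)) \<longlonglongrightarrow> 0"
  using gpow_tendsto_uniform_on_generate[OF gpow_x_in_prob_simplex n_of(2)]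
  by (simp add: c_of_eq_uniform_on G_of_def)

lemma c_of_absorbs:
  "z \<in> prob_simplex G \<Longrightarrow> supported_on (G_of G x) z \<Longrightarrow> gmult G (c_of G x) z = c_of G x"
  unfolding c_of_eq_uniform_on by (rule uniform_on_absorbs[OF subgroup_G_of])

lemma c_of_gpow_mod:
  "gmult G (c_of G x) (gpow G x N) = gmult G (c_of G x) (gpow G x (N mod m_of G x))"
proof -
  let ?m = "m_of G x"
  have "gmult G (c_of G x) (gpow G x (?m * (N div ?m))) = c_of G x"
    unfolding gpow_mult
    by (intro c_of_absorbs gpow_in_prob_simplex gpow_x_in_prob_simplex
        supported_on_gpow[OF subgroup_G_of] supported_on_G_of m_of(2))
  moreover have "gpow G x N = gmult G (gpow G x (?m * (N div ?m))) (gpow G x (N mod ?m))"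
    by (simp flip: gpow_add)
  ultimately show ?thesis by (simp add: gmult_assoc[symmetric])
qed

(* With y = x^(n_x) and N = n_x q + s, the difference is (y^q - c_x) x^s. *)

lemma l1_norm_gpow_minus_c_of_tendsto:
  "(\<lambda>N. l1_norm G (\<lambda>g. gpow G x N g - gmult G (c_of G x) (gpow G x (N mod m_of G x)) g)) \<longlonglongrightarrow> 0"
proof -
  let ?n = "n_of G x" and ?y = "gpow G x (n_of G x)"
  have bound: "l1_norm G (\<lambda>g. gpow G x N g - gmult G (c_of G x) (gpow G x (N mod m_of G x)) g)
      \<le> l1_norm G (\<lambda>g. gpow G ?y (N div ?n) g - c_of G x g)" for N
  proof -
    define q s where "q = N div ?n" and "s = N mod ?n"
    have x_N: "gpow G x N = gmult G (gpow G ?y q) (gpow G x s)"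
      by (simp add: q_def s_def flip: gpow_add gpow_mult)
    have "gmult G (c_of G x) (gpow G ?y q) = c_of G x"
      by (intro c_of_absorbs gpow_in_prob_simplex gpow_x_in_prob_simplex
          supported_on_gpow[OF subgroup_G_of] supported_on_G_of)
         (auto simp: G_of_def intro: generate.incl)
    then have "gmult G (c_of G x) (gpow G x (N mod m_of G x)) = gmult G (c_of G x) (gpow G x s)"
      using c_of_gpow_mod[of N] x_N by (simp add: gmult_assoc[symmetric])
    then have "(\<lambda>g. gpow G x N g - gmult G (c_of G x) (gpow G x (N mod m_of G x)) g)
        = gmult G (\<lambda>g. gpow G ?y q g - c_of G x g) (gpow G x s)"
      by (simp add: gmult_diff_left x_N)
    then show ?thesis
      using l1_norm_gmult_le[of "\<lambda>g. gpow G ?y q g - c_of G x g" "gpow G x s"]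
      by (simp add: q_def l1_norm_prob_simplex[OF gpow_x_in_prob_simplex])
  qed
  have "(\<lambda>N. l1_norm G (\<lambda>g. gpow G ?y (N div ?n) g - c_of G x g)) \<longlonglongrightarrow> 0"
    by (rule filterlim_compose[OF gpow_n_of_tendsto_c_of filterlim_at_top_div_const_nat])
       (use n_of(1) in simp)
  then show ?thesis
    by (rule Lim_null_comparison[rotated]) (use bound in \<open>simp add: abs_of_nonneg l1_norm_nonneg\<close>)
qed

lemma gpow_asymptotically_periodic:
  assumes "filterlim N at_top F"
  shows "((\<lambda>k. gpow G x (N k) g - gmult G (c_of G x) (gpow G x (N k mod m_of G x)) g) \<longlongrightarrow> 0) F"
proof (rule tendsto_pointwise_of_l1_norm)
  show "((\<lambda>k. l1_norm G (\<lambda>g. gpow G x (N k) g - gmult G (c_of G x) (gpow G x (N k mod m_of G x)) g))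
      \<longlongrightarrow> 0) F"
    by (rule filterlim_compose[OF l1_norm_gpow_minus_c_of_tendsto assms])
qed (simp add: diff_in_galg)

lemma gpow_n_of_tendsto_c_of_pointwise: "(\<lambda>q. gpow G (gpow G x (n_of G x)) q g) \<longlonglongrightarrow> c_of G x g"
proof -
  have "(\<lambda>q. gpow G (gpow G x (n_of G x)) q g - c_of G x g) \<longlonglongrightarrow> 0"
    by (rule tendsto_pointwise_of_l1_norm[OF gpow_n_of_tendsto_c_of])
       (simp add: diff_in_galg prob_simplex_galg[OF c_of_in_prob_simplex])
  then show ?thesis by (simp add: LIM_zero_iff)
qed

(* c_x commutes with x because it is the limit of the powers of x^(n_x). *)

lemma x_c_of_commute: "gmult G x (c_of G x) = gmult G (c_of G x) x"
proof (rule ext)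
  fix g
  let ?y = "gpow G x (n_of G x)"
  have commute: "gmult G x (gpow G ?y q) = gmult G (gpow G ?y q) x" for q
    using gpow_Suc_left[OF prob_simplex_galg[OF x_in_prob_simplex], of "n_of G x * q"]
    by (simp add: gpow_mult)
  have "(\<lambda>q. gmult G x (gpow G ?y q) g) \<longlonglongrightarrow> gmult G x (c_of G x) g"
    by (rule tendsto_gmult_right) (rule gpow_n_of_tendsto_c_of_pointwise)
  moreover have "(\<lambda>q. gmult G x (gpow G ?y q) g) \<longlonglongrightarrow> gmult G (c_of G x) x g"
    unfolding commute by (rule tendsto_gmult_left) (rule gpow_n_of_tendsto_c_of_pointwise)
  ultimately show "gmult G x (c_of G x) g = gmult G (c_of G x) x g"
    by (rule LIMSEQ_unique)
qed

lemma c_of_commutes: "gmult G (c_of G x) (gpow G x j) = gmult G (gpow G x j) (c_of G x)"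
proof (induction j)
  case 0
  show ?case by (simp add: prob_simplex_galg[OF c_of_in_prob_simplex])
next
  case (Suc j)
  have "gmult G (c_of G x) (gpow G x (Suc j)) = gmult G (gpow G x j) (gmult G (c_of G x) x)"
    by (simp add: Suc gmult_assoc[symmetric])
  also have "\<dots> = gmult G (gpow G x (Suc j)) (c_of G x)"
    by (simp add: x_c_of_commute[symmetric] gmult_assoc)
  finally show ?case .
qed

lemma inj_on_c_of_gpow: "inj_on (\<lambda>i. gmult G (c_of G x) (gpow G x i)) {..<m_of G x}"
proof -
  let ?m = "m_of G x" and ?c = "c_of G x"
  have c_shift: "gmult G (gmult G ?c (gpow G x i)) (gpow G x t) = gmult G ?c (gpow G x ((i + t) mod ?m))"
    for i t
    by (simp add: gmult_assoc c_of_gpow_mod[of "i + t"] flip: gpow_add)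
  have "gmult G ?c (gpow G x i) \<noteq> gmult G ?c (gpow G x j)" if "i < j" "j < ?m" for i j
  proof
    assume eq: "gmult G ?c (gpow G x i) = gmult G ?c (gpow G x j)"
    have "j + (?m - i) = (j - i) + ?m"
      using that by simp
    then have "(j + (?m - i)) mod ?m = j - i"
      by (simp only:) (simp add: that less_imp_diff_less)
    then have "gmult G ?c (gpow G x (j - i)) = gmult G ?c (gpow G x ((i + (?m - i)) mod ?m))"
      using c_shift[of i "?m - i"] c_shift[of j "?m - i"] by (simp only: eq)
    also have "\<dots> = ?c"
      using that by (simp add: prob_simplex_galg[OF c_of_in_prob_simplex])
    finally have "gmult G ?c (gpow G x (j - i)) = ?c" .
    then have "supp G (gpow G x (j - i)) \<subseteq> G_of G x"
      unfolding c_of_eq_uniform_on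
      by (rule supp_subset_if_uniform_on_absorbs[OF subgroup_G_of gpow_x_in_prob_simplex])
    then show False using m_of_minimal[of "j - i"] that by simp
  qed
  then show ?thesis
    by (intro inj_onI) (metis lessThan_iff linorder_neqE_nat)
qed

end

section \<open>Limit points of the powers x^(r^n)\<close>

locale periodic_power_residues = random_walk +
  fixes r d :: nat and m :: "nat \<Rightarrow> nat" and N :: nat
  assumes r_gt_1: "1 < r" and d_pos: "0 < d" and inj_m: "inj_on m {..<d}" and N_ge_1: "1 \<le> N"
    and periodic: "\<And>n. N \<le> n \<Longrightarrow> r ^ n mod m_of G x = m ((n - N) mod d)"
begin

definition limit_point :: "nat \<Rightarrow> 'a \<Rightarrow> real" where
  "limit_point i = gmult G (c_of G x) (gpow G x (m i))"

lemma m_less_m_of: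
  assumes "i < d"
  shows "m i < m_of G x"
proof -
  have "m i = r ^ (N + i) mod m_of G x"
    using periodic[of "N + i"] assms by simp
  then show ?thesis using m_of(1) by simp
qed

lemma c_of_gpow_r_pow:
  "N \<le> n \<Longrightarrow> gmult G (c_of G x) (gpow G x (r ^ n mod m_of G x)) = limit_point ((n - N) mod d)"
  by (simp add: periodic limit_point_def)

lemma inj_on_limit_point: "inj_on limit_point {..<d}"
proof (rule inj_onI)
  fix i j assume "i \<in> {..<d}" "j \<in> {..<d}" "limit_point i = limit_point j"
  then have "m i = m j"
    using inj_onD[OF inj_on_c_of_gpow] m_less_m_of by (simp add: limit_point_def)
  then show "i = j" using inj_onD[OF inj_m] \<open>i \<in> {..<d}\<close> \<open>j \<in> {..<d}\<close> by blast
qed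

lemma gpow_r_pow_minus_limit_point_tendsto:
  assumes "filterlim \<tau> at_top F"
  shows "((\<lambda>k. gpow G x (r ^ \<tau> k) g - limit_point ((\<tau> k - N) mod d) g) \<longlongrightarrow> 0) F"
proof -
  have "filterlim (\<lambda>n. r ^ n) at_top sequentially"
    using r_gt_1 by (intro filterlim_subseq strict_monoI power_strict_increasing) auto
  then have "((\<lambda>k. gpow G x (r ^ \<tau> k) g
      - gmult G (c_of G x) (gpow G x (r ^ \<tau> k mod m_of G x)) g) \<longlongrightarrow> 0) F"
    by (intro gpow_asymptotically_periodic filterlim_compose[OF _ assms])
  moreover have "\<forall>\<^sub>F k in F. N \<le> \<tau> k"
    using assms by (simp add: filterlim_at_top)
  ultimately show ?thesis
    by (elim Lim_transform_eventually eventually_mono) (simp add: c_of_gpow_r_pow)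
qed

lemma S_lim_subset: "S_lim G r x \<subseteq> limit_point ` {..<d}"
proof
  fix L assume "L \<in> S_lim G r x"
  then obtain \<sigma> :: "nat \<Rightarrow> nat" where "strict_mono \<sigma>"
    and lim: "(\<lambda>n. gpow G x (r ^ (\<sigma> n + 1))) \<longlonglongrightarrow> L"
    by (auto simp: S_lim_def)
  then have \<tau>: "filterlim (\<lambda>n. \<sigma> n + 1) at_top sequentially"
    by (intro filterlim_subseq) (auto simp: strict_mono_def)
  have "(\<lambda>n. limit_point ((\<sigma> n + 1 - N) mod d)) \<longlonglongrightarrow> L"
    unfolding tendsto_fun_iff
  proof
    fix g
    show "(\<lambda>n. limit_point ((\<sigma> n + 1 - N) mod d) g) \<longlonglongrightarrow> L g"
      using tendsto_diff[OF lim[unfolded tendsto_fun_iff, rule_format, of g]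
          gpow_r_pow_minus_limit_point_tendsto[OF \<tau>, of g]]
      by simp
  qed
  moreover have "limit_point ((\<sigma> n + 1 - N) mod d) \<in> limit_point ` {..<d}" for n
    using d_pos by simp
  ultimately show "L \<in> limit_point ` {..<d}"
    by (intro Lim_in_closed_set[OF closed_finite_fun_set]) auto
qed

lemma limit_point_in_S_lim:
  assumes "i < d"
  shows "limit_point i \<in> S_lim G r x"
proof -
  define \<sigma> where "\<sigma> k = N - 1 + i + k * d" for k
  have "strict_mono \<sigma>"
    using d_pos by (intro strict_monoI) (simp add: \<sigma>_def)
  then have \<tau>: "filterlim (\<lambda>k. \<sigma> k + 1) at_top sequentially"
    by (intro filterlim_subseq) (auto simp: strict_mono_def)
  have "(\<sigma> k + 1 - N) mod d = i" for k
    using N_ge_1 assms by (simp add: \<sigma>_def)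
  then have "(\<lambda>k. gpow G x (r ^ (\<sigma> k + 1))) \<longlonglongrightarrow> limit_point i"
    using gpow_r_pow_minus_limit_point_tendsto[OF \<tau>]
    by (simp add: tendsto_fun_iff LIM_zero_iff)
  then show ?thesis
    using \<open>strict_mono \<sigma>\<close> by (auto simp: S_lim_def)
qed

theorem S_lim_eq: "S_lim G r x = limit_point ` {..<d}"
  using S_lim_subset limit_point_in_S_lim by blast

lemma card_S_lim: "card (S_lim G r x) = d"
  by (simp add: S_lim_eq card_image[OF inj_on_limit_point])

lemma d_eq_1_iff: "d = 1 \<longleftrightarrow> (\<exists>k\<ge>1. m_of G x dvd r ^ k * (r - 1))"
proof -
  have step: "r ^ (n + 1) - r ^ n = r ^ n * (r - 1)" for n
    by (simp add: diff_mult_distrib2 mult.commute)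
  have residue_step: "r ^ (n + 1) mod m_of G x = r ^ n mod m_of G x \<longleftrightarrow> m_of G x dvd r ^ n * (r - 1)" for n
    using mod_eq_dvd_iff_nat[of "r ^ n" "r ^ (n + 1)" "m_of G x"] r_gt_1 step[of n] by simp
  show ?thesis
  proof
    assume "d = 1"
    then have "m_of G x dvd r ^ N * (r - 1)"
      using residue_step[of N] periodic[of N] periodic[of "N + 1"] by simp
    then show "\<exists>k\<ge>1. m_of G x dvd r ^ k * (r - 1)" using N_ge_1 by blast
  next
    assume "\<exists>k\<ge>1. m_of G x dvd r ^ k * (r - 1)"
    then obtain k where "m_of G x dvd r ^ k * (r - 1)" by blast
    then have "m_of G x dvd r ^ (N + k) * (r - 1)"
      by (simp add: power_add mult.assoc)
    then have "m ((k + 1) mod d) = m (k mod d)"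
      using residue_step[of "N + k"] periodic[of "N + k"] periodic[of "N + k + 1"] by simp
    then have "(k + 1) mod d = k mod d"
      using inj_onD[OF inj_m] d_pos by simp
    then show "d = 1"
      using mod_eq_dvd_iff_nat[of k "k + 1" d] by simp
  qed
qed

lemma window_mean_gpow_r_pow_tendsto:
  "(\<lambda>i. (\<Sum>t<d. gpow G x (r ^ (i + t)) g) / d) \<longlonglongrightarrow> (\<Sum>j<d. limit_point j g) / d"
proof -
  define a where "a i = gpow G x (r ^ i) g" for i
  define b where "b i = limit_point ((i - N) mod d) g" for i
  have "(\<lambda>i. a i - b i) \<longlonglongrightarrow> 0"
    unfolding a_def b_def by (rule gpow_r_pow_minus_limit_point_tendsto[OF filterlim_ident])
  then have "(\<lambda>i. ((\<Sum>t<d. a (i + t) - b (i + t)) + (\<Sum>j<d. limit_point j g)) / d)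
      \<longlonglongrightarrow> (0 + (\<Sum>j<d. limit_point j g)) / d"
    by (intro tendsto_intros tendsto_null_sum LIMSEQ_ignore_initial_segment) (use d_pos in auto)
  moreover have "\<forall>\<^sub>F i in sequentially.
      ((\<Sum>t<d. a (i + t) - b (i + t)) + (\<Sum>j<d. limit_point j g)) / d = (\<Sum>t<d. a (i + t)) / d"
    using eventually_ge_at_top[of N]
  proof eventually_elim
    case (elim i)
    then have "(\<Sum>t<d. b (i + t)) = (\<Sum>t<d. limit_point ((i - N + t) mod d) g)"
      by (simp add: b_def)
    also have "\<dots> = (\<Sum>j<d. limit_point j g)"
      by (rule sum_lessThan_rotate[OF d_pos])
    finally show ?case by (simp add: sum_subtractf)
  qed
  ultimately have "(\<lambda>i. (\<Sum>t<d. a (i + t)) / d) \<longlonglongrightarrow> (0 + (\<Sum>j<d. limit_point j g)) / d"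
    by (rule Lim_transform_eventually)
  then show ?thesis by (simp add: a_def)
qed

lemma cesaro_mean_gpow_r_pow:
  "(\<lambda>n. (\<lambda>g. (\<Sum>i=1..n. gpow G x (r ^ i) g) / real n))
     \<longlonglongrightarrow> (\<lambda>g. (\<Sum>i<d. limit_point i g) / real d)"
  unfolding tendsto_fun_iff
proof
  fix g
  have "\<bar>gpow G x (r ^ i) g\<bar> \<le> 1" for i
    using prob_simplex_nonneg[OF gpow_x_in_prob_simplex] prob_simplex_le_1[OF gpow_x_in_prob_simplex]
    by simp
  then show "(\<lambda>n. (\<Sum>i=1..n. gpow G x (r ^ i) g) / n) \<longlonglongrightarrow> (\<Sum>i<d. limit_point i g) / d"
    by (rule cesaro_mean_tendsto_of_window_mean[OF _ d_pos window_mean_gpow_r_pow_tendsto])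
qed

end

theorem theorem1:
  fixes G (structure) and r :: nat and x :: "'a \<Rightarrow> real"
    and d :: nat and m :: "nat \<Rightarrow> nat"
  assumes "group G" and "finite (carrier G)" and "r > 1"
    and "x \<in> prob_simplex G"
    and "d \<ge> 1" and "inj_on m {..<d}"
    and "\<exists>N\<ge>1. \<forall>n\<ge>N. r ^ n mod m_of G x = m ((n - N) mod d)"
  shows "S_lim G r x = {gmult G (c_of G x) (gpow G x (m i)) | i. i < d}
       \<and> S_lim G r x = {gmult G (gpow G x (m i)) (c_of G x) | i. i < d}
       \<and> (card (S_lim G r x) = 1 \<longleftrightarrow> (\<exists>k\<ge>1. m_of G x dvd r ^ k * (r - 1)))
       \<and> ((\<lambda>n. (\<lambda>g. (\<Sum>i=1..n. gpow G x (r ^ i) g) / real n))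
            \<longlonglongrightarrow> (\<lambda>g. (\<Sum>i<d. gmult G (gpow G x (m i)) (c_of G x) g) / real d))"
proof -
  obtain N where "1 \<le> N" "\<forall>n\<ge>N. r ^ n mod m_of G x = m ((n - N) mod d)"
    using assms(7) by blast
  then interpret periodic_power_residues G x r d m N
    using assms
    by (intro periodic_power_residues.intro random_walk.intro finite_group.intro
        periodic_power_residues_axioms.intro random_walk_axioms.intro finite_group_axioms.intro) auto
  have "{gmult G (c_of G x) (gpow G x (m i)) | i. i < d} = limit_point ` {..<d}"
    and "{gmult G (gpow G x (m i)) (c_of G x) | i. i < d} = limit_point ` {..<d}"
    by (auto simp: limit_point_def c_of_commutes)
  moreover have "limit_point i = gmult G (gpow G x (m i)) (c_of G x)" for i
    by (simp add: limit_point_def c_of_commutes)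
  ultimately show ?thesis
    using S_lim_eq card_S_lim d_eq_1_iff cesaro_mean_gpow_r_pow by simp
qed

end
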